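(* Let $p$ be an odd prime and $r$ an integer with $1\leq r<p-1$. Then ${r+p \brace p}_{\leq r}\equiv 0\pmod p$.
   Context: For integers $N\geq k\geq0$ and $r\ge1$, the $r$-restricted Stirling number of the second kind ${N \brace k}_{\leq r}$ is $\sum \frac{N!}{\prod_{m=1}^r j_m!(m!)^{j_m}}$ over $(j_1,\dots,j_r)\in\mathbb{N}^r$ with $\sum j_m=k$, $\sum m j_m=N$; equivalently the number of partitions of an $N$-element set into $k$ nonempty blocks of size at most $r$. *)

theory Defs
  imports Complex_Main "HOL-Computational_Algebra.Primes"
begin

text \<open>Admissible index tuples (j_1,...,j_r), encoded as functions nat => nat
  vanishing outside {1..r}, with sum j_m = k and sum m*j_m = N.\<close>
definition rstir_tuples :: "nat \<Rightarrow> nat \<Rightarrow> nat \<Rightarrow> (nat \<Rightarrow> nat) set" where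
  "rstir_tuples N k r = {j. (\<forall>m. m \<notin> {1..r} \<longrightarrow> j m = 0)
      \<and> (\<Sum>m=1..r. j m) = k \<and> (\<Sum>m=1..r. m * j m) = N}"

text \<open>Each summand is an integer (a multinomial count), so the division in nat is exact;
  we compute it in the rationals to avoid relying on that.\<close>
definition rstirling :: "nat \<Rightarrow> nat \<Rightarrow> nat \<Rightarrow> rat" where
  "rstirling N k r = (\<Sum>j\<in>rstir_tuples N k r.
      fact N / (\<Prod>m=1..r. fact (j m) * (fact m) ^ (j m)))"

end

theory Submission
  imports Defs
begin

text \<open>Each summand (r+p)!/D_j is an integer, since its denominator
  D_j = \<Prod> j_m! (m!)^(j_m) divides \<Prod> (m j_m)!, which divides
  (\<Sum> m j_m)! = (r+p)!. The prime p divides (r+p)! but not D_j: every m \<le> r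
  is below p, and no j_m can reach p, because j_m = p forces all other entries to vanish
  and then (m - 1) p = r, impossible for 0 < r < p.\<close>

lemma Suc_dvd_choose_mult:
  assumes "0 < m"
  shows "Suc j dvd (m * Suc j choose m)"
proof -
  have "m * (m * Suc j choose m) = m * (Suc j * (m * Suc j - 1 choose (m - 1)))"
    using times_binomial_minus1_eq[OF assms, of "m * Suc j"] by (metis mult.assoc)
  then have "(m * Suc j choose m) = Suc j * (m * Suc j - 1 choose (m - 1))"
    using assms by simp
  then show ?thesis by (metis dvd_triv_left)
qed

lemma fact_mult_power_fact_dvd_fact:
  assumes "0 < m"
  shows "fact j * fact m ^ j dvd (fact (m * j) :: nat)"
proof (induction j)
  case 0
  show ?case by simp
next
  case (Suc j)
  have binom: "fact m * fact (m * j) * (m * Suc j choose m) = fact (m * Suc j)"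
    using binomial_fact_lemma[of m "m * Suc j"] by (simp add: algebra_simps)
  have "fact (Suc j) * fact m ^ Suc j = (fact j * fact m ^ j) * (fact m * Suc j)"
    by (simp add: algebra_simps)
  also have "\<dots> dvd fact (m * j) * (fact m * (m * Suc j choose m))"
    by (intro mult_dvd_mono Suc.IH dvd_refl Suc_dvd_choose_mult assms)
  also have "\<dots> = fact (m * Suc j)"
    using binom by (simp only: mult.left_commute mult.assoc)
  finally show ?case .
qed

lemma prod_fact_dvd_fact_sum:
  "(\<Prod>i\<in>I. fact (a i)) dvd (fact (\<Sum>i\<in>I. a i) :: nat)"
proof (induction I rule: infinite_finite_induct)
  case (insert x I)
  have "(\<Prod>i\<in>insert x I. fact (a i)) dvd (fact (a x) * fact (\<Sum>i\<in>I. a i) :: nat)"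
    using insert by (simp add: mult_dvd_mono)
  also have "\<dots> dvd fact (\<Sum>i\<in>insert x I. a i)"
    using insert fact_fact_dvd_fact by simp
  finally show ?case .
qed simp_all

definition rstir_denom :: "nat \<Rightarrow> (nat \<Rightarrow> nat) \<Rightarrow> nat" where
  "rstir_denom r j = (\<Prod>m=1..r. fact (j m) * fact m ^ j m)"

lemma rstir_denom_dvd_fact:
  assumes "j \<in> rstir_tuples N k r"
  shows "rstir_denom r j dvd fact N"
proof -
  have "rstir_denom r j dvd (\<Prod>m=1..r. fact (m * j m))"
    unfolding rstir_denom_def by (intro prod_dvd_prod fact_mult_power_fact_dvd_fact) simp
  also have "\<dots> dvd fact (\<Sum>m=1..r. m * j m)"
    by (rule prod_fact_dvd_fact_sum)
  finally show ?thesis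
    using assms by (simp add: rstir_tuples_def)
qed

lemma rstirling_eq_sum_div:
  "rstirling N k r = of_nat (\<Sum>j\<in>rstir_tuples N k r. fact N div rstir_denom r j)"
proof -
  have "fact N / (\<Prod>m=1..r. fact (j m) * fact m ^ j m) = (of_nat (fact N div rstir_denom r j) :: rat)"
    if j: "j \<in> rstir_tuples N k r" for j
  proof -
    have denom: "(\<Prod>m=1..r. fact (j m) * fact m ^ j m) = (of_nat (rstir_denom r j) :: rat)"
      by (simp add: rstir_denom_def of_nat_fact)
    obtain q where q: "fact N = rstir_denom r j * q"
      using rstir_denom_dvd_fact[OF j] ..
    then have "(fact N :: rat) = of_nat (rstir_denom r j) * of_nat q"
      by (metis of_nat_fact of_nat_mult)
    moreover have "rstir_denom r j \<noteq> 0"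
      by (simp add: rstir_denom_def)
    ultimately show ?thesis
      unfolding denom q by simp
  qed
  then show ?thesis
    unfolding rstirling_def of_nat_sum by (rule sum.cong[OF refl])
qed

lemma rstir_tuples_entry_less:
  assumes "j \<in> rstir_tuples (r + k) k r" and "0 < r" and "r < k"
  shows "j m < k"
proof (rule ccontr)
  assume "\<not> j m < k"
  from assms(1) have outside: "\<forall>m. m \<notin> {1..r} \<longrightarrow> j m = 0"
    and count: "(\<Sum>i=1..r. j i) = k" and weight: "(\<Sum>i=1..r. i * j i) = r + k"
    by (auto simp: rstir_tuples_def)
  have m: "m \<in> {1..r}"
    using outside \<open>\<not> j m < k\<close> assms(3) by auto
  have "j m \<le> k"
    using count m by (metis finite_atLeastAtMost member_le_sum zero_le)
  with \<open>\<not> j m < k\<close> have jm: "j m = k" by simp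
  with count m have "\<forall>i\<in>{1..r}-{m}. j i = 0"
    using sum.remove[of "{1..r}" m j] by simp
  then have "(\<Sum>i=1..r. i * j i) = m * k"
    using sum.remove[of "{1..r}" m "\<lambda>i. i * j i"] m jm by simp
  with weight have "(m - 1) * k = r"
    by (simp add: diff_mult_distrib)
  moreover have "m - 1 = 0 \<or> k \<le> (m - 1) * k"
    by (cases "m - 1") simp_all
  ultimately show False
    using assms(2,3) by auto
qed

lemma prime_not_dvd_rstir_denom:
  assumes "prime p" and "r < p" and "\<And>m. m \<in> {1..r} \<Longrightarrow> j m < p"
  shows "\<not> p dvd rstir_denom r j"
proof
  assume "p dvd rstir_denom r j"
  then obtain m where m: "m \<in> {1..r}" and "p dvd fact (j m) * fact m ^ j m"
    by (auto simp: rstir_denom_def prime_dvd_prod_iff[OF finite_atLeastAtMost assms(1)])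
  then have "p dvd fact (j m) \<or> p dvd fact m"
    using assms(1) prime_dvd_mult_iff prime_dvd_power by blast
  moreover have "m < p" "j m < p"
    using m assms(2,3) by auto
  ultimately show False
    using prime_dvd_fact_iff[OF assms(1)] by auto
qed

theorem lemma3p12:
  fixes p r :: nat
  assumes "prime p" and "odd p" and "1 \<le> r" and "r < p - 1"
  shows "\<exists>z::int. rstirling (r + p) p r = of_int (int p * z)"
proof -
  have "p dvd (\<Sum>j\<in>rstir_tuples (r + p) p r. fact (r + p) div rstir_denom r j)"
  proof (rule dvd_sum)
    fix j assume j: "j \<in> rstir_tuples (r + p) p r"
    have "\<not> p dvd rstir_denom r j"
      using assms rstir_tuples_entry_less[OF j] by (intro prime_not_dvd_rstir_denom) auto
    moreover have "fact (r + p) = rstir_denom r j * (fact (r + p) div rstir_denom r j)"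
      using rstir_denom_dvd_fact[OF j] by simp
    moreover have "p dvd fact (r + p)"
      using prime_dvd_fact_iff[OF assms(1)] by simp
    ultimately show "p dvd fact (r + p) div rstir_denom r j"
      using assms(1) prime_dvd_mult_iff by metis
  qed
  then obtain z where "(\<Sum>j\<in>rstir_tuples (r + p) p r. fact (r + p) div rstir_denom r j) = p * z" ..
  then show ?thesis
    by (intro exI[of _ "int z"]) (simp add: rstirling_eq_sum_div)
qed

end
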